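(* As formal power series in $X$, $$\prod_{\mathcal{O}\in\Omega_{\alpha,\gamma}}\bigl(1-(-1)^{j(\mathcal{O})+\epsilon(\mathcal{O})}X^{|\mathcal{O}|}\bigr)^{-1}=1-uX^2,$$ where $u=(-1)^{(q-1)/2}$.
   Context: $k$ is an algebraic closure of $\mathbb{F}_q$, $q$ odd; $k^\triangle=k\setminus\{0,1,-1\}$; $\alpha(\lambda)=\lambda^{-1}$, $\gamma(\lambda)=\lambda^q$ on $k^\triangle$. $\Omega_{\alpha,\gamma}$ is the set of orbits of the group generated by $\alpha,\gamma$ on $k^\triangle$; $\Omega'_{\alpha,\gamma}$ consists of those orbits that are a single $\gamma$-orbit and $\Omega''_{\alpha,\gamma}$ of the others. $j(\mathcal{O})=1$ if $\mathcal{O}\in\Omega'_{\alpha,\gamma}$ and $j(\mathcal{O})=0$ otherwise. For $\mathcal{O}\in\Omega''_{\alpha,\gamma}$ and $\lambda\in\mathcal{O}$, $\lambda^{q^{|\mathcal{O}|/2}}=\lambda$ and $(-1)^{\epsilon(\mathcal{O})}=\lambda^{(q^{|\mathcal{O}|/2}-1)/2}$; for $\mathcal{O}\in\Omega'_{\alpha,\gamma}$ and $\lambda\in\mathcal{O}$, $\lambda^{q^{|\mathcal{O}|/2}}=\lambda^{-1}$ and $(-1)^{\epsilon(\mathcal{O})}=\lambda^{(q^{|\mathcal{O}|/2}+1)/2}$; this defines $\epsilon(\mathcal{O})\in\mathbb{Z}/2$ independently of $\lambda$. *)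

theory Defs
  imports "HOL-Computational_Algebra.Computational_Algebra"
begin

definition tri :: "'k::field set" where
  "tri = UNIV - {0, 1, -1}"

definition gamma_rel :: "nat \<Rightarrow> ('k::field \<times> 'k) set" where
  "gamma_rel q = {(x, y). y = x ^ q}"

definition alpha_rel :: "('k::field \<times> 'k) set" where
  "alpha_rel = {(x, y). y = inverse x}"

(* orbit of x under the group generated by alpha and gamma:
   closure under alpha, gamma and their inverses *)
definition ag_orbit :: "nat \<Rightarrow> 'k::field \<Rightarrow> 'k set" where
  "ag_orbit q x = ((gamma_rel q \<union> alpha_rel) \<union> (gamma_rel q \<union> alpha_rel)\<inverse>)\<^sup>* `` {x}"

definition g_orbit :: "nat \<Rightarrow> 'k::field \<Rightarrow> 'k set" where
  "g_orbit q x = (gamma_rel q \<union> (gamma_rel q)\<inverse>)\<^sup>* `` {x}"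

definition Omega :: "nat \<Rightarrow> 'k::field set set" where
  "Omega q = ag_orbit q ` tri"

definition Omega' :: "nat \<Rightarrow> 'k::field set set" where
  "Omega' q = {Ob \<in> Omega q. \<exists>x\<in>Ob. Ob = g_orbit q x}"

definition jO :: "nat \<Rightarrow> 'k::field set \<Rightarrow> nat" where
  "jO q Ob = (if Ob \<in> Omega' q then 1 else 0)"

definition epsO :: "nat \<Rightarrow> 'k::field set \<Rightarrow> nat" where
  "epsO q Ob =
     (let l = (SOME l. l \<in> Ob);
          v = (if Ob \<in> Omega' q then l ^ ((q ^ (card Ob div 2) + 1) div 2)
               else l ^ ((q ^ (card Ob div 2) - 1) div 2))
      in if v = 1 then 0 else 1)"

definition algebraic_over_prime_field :: "'k::field itself \<Rightarrow> bool" where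
  "algebraic_over_prime_field _ \<longleftrightarrow>
     (\<forall>x::'k. \<exists>P::'k poly. P \<noteq> 0 \<and> (\<forall>i. coeff P i \<in> range of_nat) \<and> poly P x = 0)"

end

theory Submission
  imports Defs
begin

(* Taking logarithmic derivatives X f'/f turns the Euler product into a sum: an orbit O contributes
   |O| c^(n/|O|) to the coefficient of X^n whenever |O| divides n, where c = (-1)^(j(O)+eps(O)).
   All orbits have even size, and the orbits whose size divides 2t partition the set of
   lambda in k^triangle with lambda^(q^t) = lambda^(+-1), i.e. the (q^t - 1)-th and (q^t + 1)-th roots
   of unity other than +-1. On these, c^(2t/|O|) is the quadratic character of the cyclic group
   of order q^t - 1, resp. minus that of the group of order q^t + 1. A quadratic character sums to
   zero over its group, so only the excluded points +-1 remain, and they give -2 (-1)^((q^t-1)/2)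
   = -2 u^t: the coefficient of X^(2t) in the logarithmic derivative of 1 - u X^2. *)

section \<open>Logarithmic derivatives of formal power series\<close>

definition fps_logderiv :: "'a::field fps \<Rightarrow> 'a fps" where
  "fps_logderiv A = fps_X * fps_deriv A * inverse A"

lemma fps_logderiv_nth_0 [simp]: "fps_logderiv A $ 0 = 0"
  by (simp add: fps_logderiv_def)

lemma fps_logderiv_one [simp]: "fps_logderiv 1 = 0"
  by (simp add: fps_logderiv_def)

lemma fps_logderiv_mult:
  fixes A B :: "'a::field fps"
  assumes "A $ 0 \<noteq> 0" "B $ 0 \<noteq> 0"
  shows "fps_logderiv (A * B) = fps_logderiv A + fps_logderiv B"
proof -
  have "fps_logderiv (A * B) = fps_X * (A * fps_deriv B + fps_deriv A * B) * (inverse A * inverse B)"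
    by (simp add: fps_logderiv_def fps_inverse_mult)
  also have "\<dots> = fps_X * fps_deriv B * inverse B * (A * inverse A)
                  + fps_X * fps_deriv A * inverse A * (B * inverse B)"
    by (simp add: algebra_simps)
  also have "\<dots> = fps_logderiv A + fps_logderiv B"
    using assms by (simp add: inverse_mult_eq_1' fps_logderiv_def add.commute)
  finally show ?thesis .
qed

lemma fps_logderiv_inverse:
  fixes A :: "'a::field fps"
  assumes "A $ 0 \<noteq> 0"
  shows "fps_logderiv (inverse A) = - fps_logderiv A"
proof -
  have "fps_logderiv (inverse A) = - (fps_X * fps_deriv A * inverse A) * (A * inverse A)"
    using assms by (simp add: fps_logderiv_def fps_inverse_deriv power2_eq_square algebra_simps)
  then show ?thesis
    using assms by (simp add: inverse_mult_eq_1' fps_logderiv_def)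
qed

lemma fps_nth_0_prod: "(\<Prod>x\<in>S. f x :: 'a::comm_ring_1 fps) $ 0 = (\<Prod>x\<in>S. f x $ 0)"
  by (induction S rule: infinite_finite_induct) auto

lemma fps_logderiv_prod:
  fixes f :: "'b \<Rightarrow> 'a::field fps"
  assumes "finite S" "\<And>x. x \<in> S \<Longrightarrow> f x $ 0 \<noteq> 0"
  shows "fps_logderiv (\<Prod>x\<in>S. f x) = (\<Sum>x\<in>S. fps_logderiv (f x))"
  using assms
proof (induction S rule: finite_induct)
  case (insert a S)
  then have "(\<Prod>x\<in>S. f x) $ 0 \<noteq> 0" by (simp add: fps_nth_0_prod)
  with insert show ?case by (simp add: fps_logderiv_mult)
qed simp

lemma fps_logderiv_recursion:
  fixes A :: "'a::field fps"
  assumes "A $ 0 \<noteq> 0"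
  shows "of_nat n * A $ n = (\<Sum>i\<le>n. fps_logderiv A $ i * A $ (n - i))"
proof -
  have "fps_X * fps_deriv A = fps_logderiv A * A"
    using assms by (simp add: fps_logderiv_def inverse_mult_eq_1 mult.assoc)
  then have "(fps_X * fps_deriv A) $ n = (fps_logderiv A * A) $ n" by simp
  moreover have "(fps_X * fps_deriv A) $ n = of_nat n * A $ n"
    by (cases n) simp_all
  ultimately show ?thesis
    by (simp add: fps_mult_nth atLeast0AtMost)
qed

lemma fps_nth_eq_if_logderiv_nth_eq:
  fixes A B :: "'a::field_char_0 fps"
  assumes "A $ 0 = B $ 0" "A $ 0 \<noteq> 0"
    and "\<And>i. i \<le> N \<Longrightarrow> fps_logderiv A $ i = fps_logderiv B $ i"
    and "n \<le> N"
  shows "A $ n = B $ n"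
  using assms(4)
proof (induction n rule: less_induct)
  case (less n)
  show ?case
  proof (cases "n = 0")
    case False
    have "of_nat n * A $ n = (\<Sum>i\<le>n. fps_logderiv A $ i * A $ (n - i))"
      using fps_logderiv_recursion assms(2) .
    also have "\<dots> = (\<Sum>i\<le>n. fps_logderiv B $ i * B $ (n - i))"
    proof (rule sum.cong [OF refl])
      fix i assume "i \<in> {..n}"
      then show "fps_logderiv A $ i * A $ (n - i) = fps_logderiv B $ i * B $ (n - i)"
        using less assms(3)[of i] less.IH[of "n - i"] by (cases "i = 0") auto
    qed
    also have "\<dots> = of_nat n * B $ n"
      using fps_logderiv_recursion[of B n] assms(1,2) by simp
    finally show ?thesis using False by simp
  qed (use assms(1) in simp)
qed

lemma fps_inverse_one_minus_X_power:
  fixes c :: "'a::field"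
  assumes "k > 0"
  shows "inverse (1 - fps_const c * fps_X ^ k) = Abs_fps (\<lambda>n. if k dvd n then c ^ (n div k) else 0)"
    (is "_ = ?G")
proof (rule fps_inverse_unique, rule fps_ext)
  fix n
  have "((1 - fps_const c * fps_X ^ k) * ?G) $ n = ?G $ n - c * (if n < k then 0 else ?G $ (n - k))"
    by (simp add: algebra_simps fps_X_power_mult_nth)
  also have "\<dots> = (1 :: 'a fps) $ n"
  proof (cases "k dvd n \<and> n \<noteq> 0")
    case True
    then obtain t where "n = k * Suc t" by (metis dvd_def mult_0_right not0_implies_Suc)
    then show ?thesis using assms by (simp add: diff_mult_distrib2)
  qed (use assms in \<open>auto simp: dvd_minus_self\<close>)
  finally show "((1 - fps_const c * fps_X ^ k) * ?G) $ n = (1 :: 'a fps) $ n" .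
qed

lemma fps_logderiv_inverse_one_minus_X_power:
  fixes c :: "'a::field"
  assumes "k > 0"
  shows "fps_logderiv (inverse (1 - fps_const c * fps_X ^ k))
           = of_nat k * (inverse (1 - fps_const c * fps_X ^ k) - 1)"
proof -
  let ?F = "1 - fps_const c * fps_X ^ k"
  have deriv: "fps_X * fps_deriv ?F = - (of_nat k * (fps_const c * fps_X ^ k))"
  proof -
    have X: "fps_X * fps_X ^ (k - 1) = (fps_X ^ k :: 'a fps)"
      using assms by (simp flip: power_Suc)
    have "fps_deriv ?F = - (fps_const c * (of_nat k * fps_X ^ (k - 1)))"
      using assms by (simp add: fps_deriv_power')
    moreover have "x * - (a * (b * y)) = - (b * (a * (x * y)))" for x a b y :: "'a fps"
      by (simp add: algebra_simps)
    ultimately show ?thesis by (simp only: X)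
  qed
  have "?F * inverse ?F = 1" using assms by (simp add: inverse_mult_eq_1')
  then have geometric: "fps_const c * fps_X ^ k * inverse ?F = inverse ?F - 1"
    by (simp add: algebra_simps)
  have "?F $ 0 \<noteq> 0" using assms by simp
  note logderiv_inverse = fps_logderiv_inverse[OF this]
  have "fps_logderiv (inverse ?F) = - (fps_X * fps_deriv ?F * inverse ?F)"
    unfolding logderiv_inverse unfolding fps_logderiv_def ..
  also have "\<dots> = of_nat k * (fps_const c * fps_X ^ k * inverse ?F)"
    by (simp only: deriv mult_minus_left minus_minus mult.assoc)
  finally show ?thesis unfolding geometric .
qed

lemma fps_logderiv_inverse_one_minus_X_power_nth:
  fixes c :: "'a::field"
  assumes "k > 0"
  shows "fps_logderiv (inverse (1 - fps_const c * fps_X ^ k)) $ n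
           = (if k dvd n \<and> n \<noteq> 0 then of_nat k * c ^ (n div k) else 0)"
  unfolding fps_logderiv_inverse_one_minus_X_power[OF assms]
  using assms by (simp add: fps_inverse_one_minus_X_power flip: fps_of_nat)

lemma fps_logderiv_one_minus_X_power_nth:
  fixes c :: "'a::field"
  assumes "k > 0"
  shows "fps_logderiv (1 - fps_const c * fps_X ^ k) $ n
           = - (if k dvd n \<and> n \<noteq> 0 then of_nat k * c ^ (n div k) else 0)"
proof -
  have "fps_logderiv (1 - fps_const c * fps_X ^ k) = - fps_logderiv (inverse (1 - fps_const c * fps_X ^ k))"
    using fps_logderiv_inverse[of "1 - fps_const c * fps_X ^ k"] assms by simp
  then show ?thesis
    using fps_logderiv_inverse_one_minus_X_power_nth[OF assms, of c n] by simp
qed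

text \<open>The truncation at \<open>N\<close> already has the logarithmic derivative of \<open>G\<close> up to \<open>X\<^sup>N\<close>, and
  in characteristic zero this determines its coefficients up to \<open>X\<^sup>N\<close>.\<close>

lemma tendsto_Euler_product:
  fixes c :: "'b \<Rightarrow> 'a::field_char_0" and d :: "'b \<Rightarrow> nat" and G :: "'a fps"
  assumes finite: "\<And>N. finite {s \<in> S. d s \<le> N}"
    and pos: "\<And>s. s \<in> S \<Longrightarrow> d s > 0"
    and G0: "G $ 0 = 1"
    and logderiv: "\<And>n. n > 0 \<Longrightarrow>
          fps_logderiv G $ n = (\<Sum>s\<in>{s \<in> S. d s dvd n}. of_nat (d s) * c s ^ (n div d s))"
  shows "(\<lambda>N. \<Prod>s\<in>{s \<in> S. d s \<le> N}. inverse (1 - fps_const (c s) * fps_X ^ d s)) \<longlonglongrightarrow> G"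
proof (rule tendsto_fpsI)
  fix n
  define A where "A N = (\<Prod>s\<in>{s \<in> S. d s \<le> N}. inverse (1 - fps_const (c s) * fps_X ^ d s))"
    for N
  have A0: "A N $ 0 = 1" for N
    by (auto simp: A_def fps_nth_0_prod intro!: prod.neutral dest: pos)
  have "A N $ n = G $ n" if "n \<le> N" for N
  proof (rule fps_nth_eq_if_logderiv_nth_eq [OF _ _ _ that])
    fix i assume "i \<le> N"
    show "fps_logderiv (A N) $ i = fps_logderiv G $ i"
    proof (cases "i = 0")
      case False
      have "fps_logderiv (A N) $ i = (\<Sum>s\<in>{s \<in> S. d s \<le> N}.
              if d s dvd i then of_nat (d s) * c s ^ (i div d s) else 0)"
        using False unfolding A_def
        by (subst fps_logderiv_prod [OF finite])
           (auto simp: fps_sum_nth fps_logderiv_inverse_one_minus_X_power_nth intro!: sum.cong dest: pos)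
      also have "\<dots> = (\<Sum>s\<in>{s \<in> {s \<in> S. d s \<le> N}. d s dvd i}. of_nat (d s) * c s ^ (i div d s))"
        by (rule sum.inter_filter [OF finite, symmetric])
      also have "{s \<in> {s \<in> S. d s \<le> N}. d s dvd i} = {s \<in> S. d s dvd i}"
        using False \<open>i \<le> N\<close> by (auto dest: dvd_imp_le)
      finally show ?thesis using logderiv False by simp
    qed simp
  qed (use A0 G0 in simp_all)
  then show "\<forall>\<^sub>F N in sequentially. A N $ n = G $ n"
    by (intro eventually_sequentiallyI [of n])
qed

lemma odd_power_half_pred_add:
  fixes q :: nat
  assumes "odd q"
  shows "(q ^ (s + d) - 1) div 2 = q ^ d * ((q ^ s - 1) div 2) + (q ^ d - 1) div 2"
proof -
  obtain a b where "q ^ s = 2 * a + 1" "q ^ d = 2 * b + 1"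
    using assms by (metis even_power oddE)
  then show ?thesis by (simp add: power_add algebra_simps)
qed

lemma odd_power_half_pred_double:
  fixes q :: nat
  assumes "odd q"
  shows "(q ^ (2 * j) - 1) div 2 = (q ^ j + 1) * ((q ^ j - 1) div 2)"
proof -
  obtain b where "q ^ j = 2 * b + 1"
    using assms by (metis even_power oddE)
  then show ?thesis by (simp add: power_mult mult.commute[of 2] power2_eq_square algebra_simps)
qed

lemma odd_power_half_succ_split:
  fixes q :: nat
  assumes "odd q" and "j \<le> t"
  shows "(q ^ t + 1) div 2 = (q ^ j + 1) div 2 + q ^ j * ((q ^ (t - j) - 1) div 2)"
proof -
  obtain a b where "q ^ (t - j) = 2 * a + 1" "q ^ j = 2 * b + 1"
    using assms by (metis even_power oddE)
  moreover have "q ^ t = q ^ j * q ^ (t - j)"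
    using assms(2) by (simp flip: power_add)
  ultimately show ?thesis by (simp add: algebra_simps)
qed

lemma neg_one_power_half_pred_power:
  fixes q :: nat
  assumes "odd q"
  shows "(-1::'a::ring_1) ^ ((q ^ t - 1) div 2) = ((-1) ^ ((q - 1) div 2)) ^ t"
proof (induction t)
  case (Suc t)
  have "(q ^ Suc t - 1) div 2 = q * ((q ^ t - 1) div 2) + (q - 1) div 2"
    using odd_power_half_pred_add[OF assms, of t 1] by simp
  with Suc assms show ?case
    by (simp add: power_add minus_one_power_iff)
qed simp

lemma square_eq_one_power_odd:
  fixes v :: "'a::ring_1"
  assumes "v\<^sup>2 = 1" and "odd k"
  shows "v ^ k = v"
proof -
  obtain j where "k = Suc (2 * j)" using assms(2) by (metis oddE Suc_eq_plus1)
  with assms(1) show ?thesis by (simp add: power_mult)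
qed

lemma power_CHAR_power_inj:
  fixes x y :: "'a::idom"
  assumes "prime CHAR('a)" and "x ^ (CHAR('a) ^ n) = y ^ (CHAR('a) ^ n)"
  shows "x = y"
proof -
  have "(x - y) ^ (CHAR('a) ^ n) = x ^ (CHAR('a) ^ n) - y ^ (CHAR('a) ^ n)"
    using freshmans_dream'[OF assms(1), of _ n "x - y" y] by (simp add: algebra_simps)
  with assms(2) show ?thesis by simp
qed

lemma of_nat_power_CHAR_power:
  assumes "prime CHAR('a::comm_semiring_1)"
  shows "(of_nat k :: 'a) ^ (CHAR('a) ^ n) = of_nat k"
proof (induction k)
  case 0
  have "CHAR('a) > 0" using prime_gt_0_nat[OF assms] .
  then show ?case by (simp add: zero_power)
next
  case (Suc k)
  then show ?case
    using freshmans_dream'[OF assms, of _ n "of_nat k" 1] by (simp add: add.commute)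
qed

lemma poly_power_CHAR_power:
  fixes P :: "'a::comm_ring_1 poly"
  assumes "prime CHAR('a)" and "\<forall>i. coeff P i \<in> range of_nat"
  shows "poly P (x ^ (CHAR('a) ^ n)) = poly P x ^ (CHAR('a) ^ n)"
proof -
  have "poly P x ^ (CHAR('a) ^ n) = (\<Sum>i\<le>degree P. (coeff P i * x ^ i) ^ (CHAR('a) ^ n))"
    unfolding poly_altdef using freshmans_dream_sum'[OF assms(1)] by blast
  also have "\<dots> = (\<Sum>i\<le>degree P. coeff P i * (x ^ (CHAR('a) ^ n)) ^ i)"
  proof (rule sum.cong [OF refl])
    fix i
    obtain k where "coeff P i = of_nat k" using assms(2) by blast
    then show "(coeff P i * x ^ i) ^ (CHAR('a) ^ n) = coeff P i * (x ^ (CHAR('a) ^ n)) ^ i"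
      using of_nat_power_CHAR_power[OF assms(1)]
      by (simp add: power_mult_distrib flip: power_mult) (simp add: mult.commute)
  qed
  finally show ?thesis by (simp add: poly_altdef)
qed

lemma frobenius_periodic:
  fixes x :: "'a::field"
  assumes "prime CHAR('a)" and "algebraic_over_prime_field TYPE('a)" and q: "q = CHAR('a) ^ m"
  shows "\<exists>n>0. x ^ (q ^ n) = x"
proof -
  obtain P :: "'a poly" where P: "P \<noteq> 0" "\<forall>i. coeff P i \<in> range of_nat" "poly P x = 0"
    using assms(2) unfolding algebraic_over_prime_field_def by blast
  have q_power: "q ^ i = CHAR('a) ^ (m * i)" for i
    by (simp add: q power_mult)
  have "CHAR('a) > 0" using prime_gt_0_nat[OF assms(1)] .
  then have "poly P (x ^ (q ^ i)) = 0" for i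
    using poly_power_CHAR_power[OF assms(1) P(2), of x "m * i"] P(3) by (simp add: q_power)
  then have "range (\<lambda>i. x ^ (q ^ i)) \<subseteq> {y. poly P y = 0}"
    by auto
  then have "finite (range (\<lambda>i. x ^ (q ^ i)))"
    using poly_roots_finite[OF P(1)] finite_subset by blast
  then obtain i j where ij: "i < j" "x ^ (q ^ i) = x ^ (q ^ j)"
    by (metis finite_imageD infinite_UNIV_nat linorder_inj_onI' nat_neq_iff)
  have "(x ^ (q ^ (j - i))) ^ (q ^ i) = x ^ (q ^ j)"
    using ij(1) by (simp flip: power_mult power_add)
  with ij(2) have "(x ^ (q ^ (j - i))) ^ (CHAR('a) ^ (m * i)) = x ^ (CHAR('a) ^ (m * i))"
    by (simp add: q_power)
  then have "x ^ (q ^ (j - i)) = x"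
    by (rule power_CHAR_power_inj [OF assms(1)])
  with ij show ?thesis by (intro exI [of _ "j - i"]) simp
qed

lemma inverse_in_tri: "(x::'a::field) \<in> tri \<Longrightarrow> inverse x \<in> tri"
  by (auto simp: tri_def) (metis inverse_inverse_eq inverse_minus_eq inverse_1)

lemma inverse_neq_self_tri: "(x::'a::field) \<in> tri \<Longrightarrow> inverse x \<noteq> x"
  by (auto simp: tri_def field_simps power2_eq_1_iff simp flip: power2_eq_square)

section \<open>Roots of unity in algebraically closed fields\<close>

lemma card_roots_alg_closed:
  fixes P :: "'a::alg_closed_field poly"
  assumes "P \<noteq> 0" and separable: "\<And>x. poly P x = 0 \<Longrightarrow> poly (pderiv P) x \<noteq> 0"
  shows "card {x. poly P x = 0} = degree P"
proof -
  obtain A where A: "size A = degree P" "P = smult (lead_coeff P) (\<Prod>x\<in>#A. [:-x, 1:])"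
    using alg_closed_imp_factorization[OF assms(1)] by blast
  have roots: "{x. poly P x = 0} = set_mset A"
    using assms(1) by (subst A(2)) (auto simp: poly_prod_mset prod_mset_zero_iff)
  have "count A a = 1" if a: "a \<in># A" for a
  proof (rule ccontr)
    assume "count A a \<noteq> 1"
    with a have "a \<in># A - {#a#}"
      using Suc_lessI[of 0 "count A a"] by (simp add: in_diff_count)
    then obtain B where B: "A = add_mset a (add_mset a B)"
      using insert_DiffM[OF a] insert_DiffM[of a "A - {#a#}"] by metis
    define f where "f = [:-a, 1:]"
    define Q where "Q = smult (lead_coeff P) (\<Prod>x\<in>#B. [:-x, 1:])"
    have P: "P = f * (f * Q)"
      using A(2) unfolding B f_def Q_def by (simp add: mult.left_commute)
    have "poly f a = 0" by (simp add: f_def)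
    then have "poly (pderiv P) a = 0"
      unfolding P pderiv_mult by simp
    moreover have "poly P a = 0"
      using roots a by blast
    ultimately show False using separable by blast
  qed
  then have "size A = card (set_mset A)"
    by (simp add: size_multiset_overloaded_eq)
  with roots A(1) show ?thesis by simp
qed

lemma card_roots_unity_alg_closed:
  assumes "M > 0" "(of_nat M :: 'a::alg_closed_field) \<noteq> 0"
  shows "card {x::'a. x ^ M = 1} = M"
proof -
  define P :: "'a poly" where "P = monom 1 M + [:-1:]"
  have deg: "degree P = M"
    using assms(1) by (simp add: P_def degree_add_eq_left degree_monom_eq)
  have "card {x. poly P x = 0} = degree P"
  proof (rule card_roots_alg_closed)
    show "P \<noteq> 0" using deg assms(1) by auto
    fix x assume "poly P x = 0"
    then have "x \<noteq> 0" using assms(1) by (auto simp: P_def poly_monom power_0_left)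
    with assms show "poly (pderiv P) x \<noteq> 0"
      by (simp add: P_def pderiv_add pderiv_monom poly_monom)
  qed
  moreover have "{x. poly P x = 0} = {x. x ^ M = 1}"
    by (simp add: P_def poly_monom)
  ultimately show ?thesis
    using deg by simp
qed

definition pm_sign :: "'a::one \<Rightarrow> rat" where
  "pm_sign v = (if v = 1 then 1 else -1)"

lemma pm_sign_one [simp]: "pm_sign 1 = 1"
  by (simp add: pm_sign_def)

lemma pm_sign_neg_one:
  "(1::'a::ring_1) \<noteq> -1 \<Longrightarrow> pm_sign (-1::'a) = -1"
  by (simp add: pm_sign_def)

lemma pm_sign_power:
  fixes v :: "'a::idom"
  assumes "v\<^sup>2 = 1" and "(1::'a) \<noteq> -1"
  shows "pm_sign (v ^ k) = pm_sign v ^ k"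
proof -
  have "v = 1 \<or> v = -1" using assms(1) by (simp add: power2_eq_1_iff)
  with assms(2) show ?thesis
    by (auto simp: pm_sign_def minus_one_power_iff)
qed

text \<open>Exactly half of the \<open>M\<close>-th roots of unity are \<open>M/2\<close>-th roots of unity.\<close>

lemma sum_pm_sign_roots_unity:
  fixes M :: nat
  assumes "M > 0" "even M" and nonzero: "(of_nat M :: 'a::alg_closed_field) \<noteq> 0"
  shows "(\<Sum>x\<in>{x::'a. x ^ M = 1}. pm_sign (x ^ (M div 2))) = 0"
proof -
  define U where "U = {x::'a. x ^ M = 1}"
  define H where "H = {x::'a. x ^ (M div 2) = 1}"
  have M: "M = 2 * (M div 2)" using assms(2) by simp
  have "(of_nat (M div 2) :: 'a) \<noteq> 0"
    using nonzero by (subst (asm) M) simp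
  then have card_H: "card H = M div 2"
    unfolding H_def using assms(1,2) by (intro card_roots_unity_alg_closed) auto
  have card_U: "card U = M"
    unfolding U_def using assms(1) nonzero by (rule card_roots_unity_alg_closed)
  then have "finite U" using assms(1) card_ge_0_finite by auto
  have "x ^ M = (x ^ (M div 2))\<^sup>2" for x :: 'a
    by (metis M mult.commute power_mult)
  then have "H \<subseteq> U"
    unfolding H_def U_def by auto
  have "(\<Sum>x\<in>U. pm_sign (x ^ (M div 2)))
          = (\<Sum>x\<in>U - H. pm_sign (x ^ (M div 2))) + (\<Sum>x\<in>H. pm_sign (x ^ (M div 2)))"
    using sum.subset_diff[OF \<open>H \<subseteq> U\<close> \<open>finite U\<close>] .
  also have "\<dots> = (\<Sum>x\<in>U - H. -1) + (\<Sum>x\<in>H. 1)"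
    by (intro arg_cong2[where f = "(+)"] sum.cong) (auto simp: H_def pm_sign_def)
  also have "\<dots> = - of_nat (M - M div 2) + of_nat (M div 2)"
    using card_Diff_subset[OF finite_subset[OF \<open>H \<subseteq> U\<close> \<open>finite U\<close>] \<open>H \<subseteq> U\<close>] card_U card_H
    by simp
  also have "\<dots> = 0" using M by (simp add: of_nat_diff)
  finally show ?thesis unfolding U_def .
qed

lemma sum_pm_sign_roots_unity_nontrivial:
  fixes M :: nat
  assumes "M > 0" "even M" and nonzero: "(of_nat M :: 'a::alg_closed_field) \<noteq> 0"
    and "(1::'a) \<noteq> -1"
  shows "(\<Sum>x\<in>{x::'a. x ^ M = 1} - {1, -1}. pm_sign (x ^ (M div 2))) = - (1 + (-1) ^ (M div 2))"
proof -
  have fin: "finite {x::'a. x ^ M = 1}"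
    using card_roots_unity_alg_closed[OF assms(1) nonzero] assms(1) card_ge_0_finite by metis
  have "{1, -1} \<subseteq> {x::'a. x ^ M = 1}" using assms(2) by auto
  from sum_diff[OF fin this]
  have "(\<Sum>x\<in>{x::'a. x ^ M = 1} - {1, -1}. pm_sign (x ^ (M div 2)))
      = (\<Sum>x\<in>{x::'a. x ^ M = 1}. pm_sign (x ^ (M div 2))) - (\<Sum>x\<in>{1::'a, -1}. pm_sign (x ^ (M div 2)))" .
  also have "\<dots> = - (1 + (-1) ^ (M div 2))"
    using sum_pm_sign_roots_unity[OF assms(1-3)] assms(4)
    by (simp add: pm_sign_power pm_sign_neg_one)
  finally show ?thesis .
qed

section \<open>Orbits of Frobenius and inversion\<close>

lemma Image_rtrancl_symcl_eq:
  assumes "y \<in> (R \<union> R\<inverse>)\<^sup>* `` {x}"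
  shows "(R \<union> R\<inverse>)\<^sup>* `` {y} = (R \<union> R\<inverse>)\<^sup>* `` {x}"
proof -
  have "sym ((R \<union> R\<inverse>)\<^sup>*)" by (intro sym_rtrancl) (auto simp: sym_def)
  with assms have "(y, x) \<in> (R \<union> R\<inverse>)\<^sup>*" by (auto dest: symD)
  with assms show ?thesis by (auto intro: rtrancl_trans)
qed

locale Fq_algebraic_closure =
  fixes p m q :: nat and field_type :: "'k::alg_closed_field itself"
  assumes prime_p: "prime p" and odd_p: "odd p" and m_pos: "m > 0" and q_def: "q = p ^ m"
    and CHAR_k: "CHAR('k) = p" and algebraic: "algebraic_over_prime_field TYPE('k)"
begin

lemma odd_q: "odd q"
  using odd_p q_def by simp

lemma q_gt_1: "q > 1"
  using prime_p m_pos q_def by (metis one_less_power prime_gt_1_nat)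

lemma prime_CHAR: "prime CHAR('k)" and q_eq_CHAR_power: "q = CHAR('k) ^ m"
  using prime_p CHAR_k q_def by simp_all

lemma one_neq_neg_one: "(1::'k) \<noteq> -1"
proof
  assume "(1::'k) = -1"
  then have "(of_nat 2 :: 'k) = 0" by (simp add: eq_neg_iff_add_eq_0 one_add_one)
  then have "p dvd 2" using CHAR_k by (metis of_nat_eq_0_iff_char_dvd)
  then have "p \<le> 2" by (simp add: dvd_imp_le)
  with prime_p odd_p show False
    by (metis le_antisym prime_ge_2_nat even_numeral)
qed

lemma frob_inj: "(x::'k) ^ (q ^ n) = y ^ (q ^ n) \<Longrightarrow> x = y"
  using power_CHAR_power_inj[OF prime_CHAR, of x "m * n" y] q_eq_CHAR_power by (simp add: power_mult)

lemma frob_frob: "((x::'k) ^ (q ^ a)) ^ (q ^ b) = x ^ (q ^ (a + b))"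
  by (simp add: power_mult power_add mult.commute)

lemma frob_Suc: "(x::'k) ^ (q ^ Suc i) = (x ^ (q ^ i)) ^ q"
  by (simp only: power_Suc2 power_mult)

definition frob_period :: "'k \<Rightarrow> nat" where
  "frob_period x = (LEAST n. n > 0 \<and> x ^ (q ^ n) = x)"

lemma frob_period: "frob_period x > 0" "x ^ (q ^ frob_period x) = x"
  using LeastI_ex[OF frobenius_periodic[OF prime_CHAR algebraic q_eq_CHAR_power, of x]]
  unfolding frob_period_def by auto

lemma frob_fixed_iff_dvd: "x ^ (q ^ t) = x \<longleftrightarrow> frob_period x dvd t"
proof -
  let ?d = "frob_period x"
  have fixed_multiple: "x ^ (q ^ (?d * k)) = x" for k
    by (induction k) (simp_all add: frob_period flip: frob_frob)
  have "x ^ (q ^ t) = (x ^ (q ^ (?d * (t div ?d)))) ^ (q ^ (t mod ?d))"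
    by (simp add: frob_frob)
  then have "x ^ (q ^ t) = x ^ (q ^ (t mod ?d))"
    by (simp add: fixed_multiple)
  moreover have "x ^ (q ^ (t mod ?d)) \<noteq> x" if "t mod ?d \<noteq> 0"
    using not_less_Least[of "t mod ?d" "\<lambda>n. n > 0 \<and> x ^ (q ^ n) = x"] frob_period(1) that
    unfolding frob_period_def[symmetric] by simp
  ultimately show ?thesis
    by (metis dvd_eq_mod_eq_0 power_0 power_one_right)
qed

lemma frob_power_eq_iff: "x ^ (q ^ s) = x ^ (q ^ t) \<longleftrightarrow> s mod frob_period x = t mod frob_period x"
proof -
  have "x ^ (q ^ s) = x ^ (q ^ t) \<longleftrightarrow> frob_period x dvd t - s" if "s \<le> t" for s t
  proof -
    have "x ^ (q ^ t) = (x ^ (q ^ (t - s))) ^ (q ^ s)"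
      using that by (simp add: frob_frob)
    then have "x ^ (q ^ s) = x ^ (q ^ t) \<longleftrightarrow> x ^ (q ^ (t - s)) = x"
      using frob_inj by metis
    then show ?thesis by (simp add: frob_fixed_iff_dvd)
  qed
  then show ?thesis
    by (metis mod_eq_dvd_iff_nat nat_le_linear)
qed

lemma frob_power_mod: "x ^ (q ^ (t mod frob_period x)) = x ^ (q ^ t)"
  by (simp add: frob_power_eq_iff)

definition frob_orbit :: "'k \<Rightarrow> 'k set" where
  "frob_orbit x = range (\<lambda>i. x ^ (q ^ i))"

lemma frob_orbit_self: "x \<in> frob_orbit x"
  unfolding frob_orbit_def by (rule range_eqI[of _ _ 0]) simp

lemma frob_orbit_eq_image: "frob_orbit x = (\<lambda>i. x ^ (q ^ i)) ` {..<frob_period x}"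
proof -
  have "x ^ (q ^ i) \<in> (\<lambda>i. x ^ (q ^ i)) ` {..<frob_period x}" for i
    using frob_power_mod[of x i] frob_period(1) by (metis image_eqI lessThan_iff mod_less_divisor)
  then show ?thesis unfolding frob_orbit_def by blast
qed

lemma card_frob_orbit: "card (frob_orbit x) = frob_period x"
proof -
  have "inj_on (\<lambda>i. x ^ (q ^ i)) {..<frob_period x}"
    by (intro inj_onI) (simp add: frob_power_eq_iff)
  then show ?thesis by (simp add: frob_orbit_eq_image card_image)
qed

lemma finite_frob_orbit: "finite (frob_orbit x)"
  by (simp add: frob_orbit_eq_image)

lemma frob_orbit_power:
  assumes "y \<in> frob_orbit x"
  shows "y ^ q \<in> frob_orbit x"
proof -
  obtain i where "y = x ^ (q ^ i)" using assms unfolding frob_orbit_def by blast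
  then have "y ^ q = x ^ (q ^ Suc i)" by (simp only: frob_Suc)
  then show ?thesis unfolding frob_orbit_def by blast
qed

lemma frob_orbit_root:
  assumes "z ^ q \<in> frob_orbit x"
  shows "z \<in> frob_orbit x"
proof -
  obtain i where i: "z ^ q = x ^ (q ^ i)" using assms unfolding frob_orbit_def by blast
  have "Suc (i + frob_period x - 1) = i + frob_period x"
    using frob_period(1) by simp
  moreover have "x ^ (q ^ (i + frob_period x)) = x ^ (q ^ i)"
    by (simp add: frob_power_eq_iff)
  ultimately have "z ^ q = (x ^ (q ^ (i + frob_period x - 1))) ^ q"
    using i frob_Suc[of x "i + frob_period x - 1"] by metis
  then have "z = x ^ (q ^ (i + frob_period x - 1))"
    using frob_inj[of _ 1] by simp
  then show ?thesis unfolding frob_orbit_def by blast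
qed

lemma g_orbit_eq_frob_orbit: "g_orbit q x = frob_orbit x"
proof
  show "g_orbit q x \<subseteq> frob_orbit x"
  proof
    fix z assume "z \<in> g_orbit q x"
    then have "(x, z) \<in> (gamma_rel q \<union> (gamma_rel q)\<inverse>)\<^sup>*" unfolding g_orbit_def by simp
    then show "z \<in> frob_orbit x"
    proof (induction rule: rtrancl_induct)
      case (step y z)
      from step.hyps(2) consider "z = y ^ q" | "y = z ^ q" by (auto simp: gamma_rel_def)
      then show ?case
        using step.IH frob_orbit_power frob_orbit_root by cases blast+
    qed (rule frob_orbit_self)
  qed
  have "(x, x ^ (q ^ i)) \<in> (gamma_rel q \<union> (gamma_rel q)\<inverse>)\<^sup>*" for i
  proof (induction i)
    case (Suc i)
    have "(x ^ (q ^ i), x ^ (q ^ Suc i)) \<in> gamma_rel q"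
      by (simp add: gamma_rel_def frob_Suc del: power_Suc)
    with Suc show ?case by (meson UnI1 rtrancl.rtrancl_into_rtrancl)
  qed simp
  then show "frob_orbit x \<subseteq> g_orbit q x"
    unfolding frob_orbit_def g_orbit_def by auto
qed

lemma frob_orbit_eq: "y \<in> frob_orbit x \<Longrightarrow> frob_orbit y = frob_orbit x"
  using Image_rtrancl_symcl_eq[of y "gamma_rel q" x]
  unfolding g_orbit_eq_frob_orbit[symmetric] g_orbit_def by simp

lemma frob_orbit_inverse: "frob_orbit (inverse x) = inverse ` frob_orbit x"
  unfolding frob_orbit_def by (auto simp: power_inverse)

lemma ag_orbit_eq: "ag_orbit q x = frob_orbit x \<union> frob_orbit (inverse x)"
proof
  let ?R = "gamma_rel q \<union> alpha_rel"
  show "ag_orbit q x \<subseteq> frob_orbit x \<union> frob_orbit (inverse x)"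
  proof
    fix z assume "z \<in> ag_orbit q x"
    then have "(x, z) \<in> (?R \<union> ?R\<inverse>)\<^sup>*" unfolding ag_orbit_def by simp
    then show "z \<in> frob_orbit x \<union> frob_orbit (inverse x)"
    proof (induction rule: rtrancl_induct)
      case (step y z)
      from step.hyps(2) consider "(y, z) \<in> gamma_rel q \<union> (gamma_rel q)\<inverse>" | "z = inverse y"
        unfolding alpha_rel_def by auto
      then show ?case
      proof cases
        case 1
        then have "z \<in> g_orbit q y" unfolding g_orbit_def by blast
        with step.IH show ?thesis
          using frob_orbit_eq by (auto simp: g_orbit_eq_frob_orbit)
      next
        case 2
        with step.IH show ?thesis by (auto simp: frob_orbit_inverse)
      qed
    qed (simp add: frob_orbit_self)
  qed
  have "frob_orbit x \<subseteq> ag_orbit q x"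
    unfolding g_orbit_eq_frob_orbit[symmetric] g_orbit_def ag_orbit_def
    by (intro Image_mono rtrancl_mono) auto
  moreover have "inverse x \<in> ag_orbit q x"
    unfolding ag_orbit_def by (intro ImageI r_into_rtrancl) (auto simp: alpha_rel_def)
  then have "ag_orbit q (inverse x) = ag_orbit q x"
    unfolding ag_orbit_def by (rule Image_rtrancl_symcl_eq)
  moreover have "frob_orbit (inverse x) \<subseteq> ag_orbit q (inverse x)"
    unfolding g_orbit_eq_frob_orbit[symmetric] g_orbit_def ag_orbit_def
    by (intro Image_mono rtrancl_mono) auto
  ultimately show "frob_orbit x \<union> frob_orbit (inverse x) \<subseteq> ag_orbit q x" by simp
qed

lemma ag_orbit_eq_of_mem: "y \<in> ag_orbit q (x::'k) \<Longrightarrow> ag_orbit q y = ag_orbit q x"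
  unfolding ag_orbit_def by (rule Image_rtrancl_symcl_eq)

lemma ag_orbit_self: "(x::'k) \<in> ag_orbit q x"
  by (simp add: ag_orbit_eq frob_orbit_self)

lemma finite_ag_orbit: "finite (ag_orbit q (x::'k))"
  by (simp add: ag_orbit_eq finite_frob_orbit)

lemma frob_power_in_tri: "(x::'k) \<in> tri \<Longrightarrow> x ^ (q ^ i) \<in> tri"
  using frob_inj[of x i 0] frob_inj[of x i 1] frob_inj[of x i "-1"] odd_q
  by (auto simp: tri_def)

lemma ag_orbit_subset_tri: "(x::'k) \<in> tri \<Longrightarrow> ag_orbit q x \<subseteq> tri"
  by (auto simp: ag_orbit_eq frob_orbit_def frob_power_in_tri inverse_in_tri)

lemma frob_period_inverse: "frob_period (inverse x) = frob_period x"
proof -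
  have "frob_period (inverse x) dvd t \<longleftrightarrow> frob_period x dvd t" for t
    unfolding frob_fixed_iff_dvd[symmetric] by (simp add: power_inverse)
  then show ?thesis by (meson dvd_antisym dvd_refl)
qed

lemma frob_period_half_inverse:
  assumes "l \<in> tri" and "inverse l \<in> frob_orbit l"
  obtains j where "frob_period l = 2 * j" "j > 0" "l ^ (q ^ j) = inverse l"
proof -
  obtain i where "inverse l = l ^ (q ^ i)" using assms(2) unfolding frob_orbit_def by blast
  define j where "j = i mod frob_period l"
  have j: "l ^ (q ^ j) = inverse l"
    using \<open>inverse l = l ^ (q ^ i)\<close> frob_power_mod j_def by metis
  have "j < frob_period l" using frob_period j_def by simp
  have "j \<noteq> 0" using j inverse_neq_self_tri[OF assms(1)] by (metis power_0 power_one_right)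
  have "l ^ (q ^ (j + j)) = l"
    by (simp flip: frob_frob add: j power_inverse)
  then obtain c where c: "2 * j = frob_period l * c"
    using frob_fixed_iff_dvd by (metis dvdE mult_2)
  have "c < 2"
  proof (rule ccontr)
    assume "\<not> c < 2"
    then have "frob_period l * 2 \<le> frob_period l * c" by simp
    with c \<open>j < frob_period l\<close> show False by linarith
  qed
  moreover have "c \<noteq> 0" using c \<open>j \<noteq> 0\<close> by (metis mult_0_right mult_is_0 zero_neq_numeral)
  ultimately have "c = 1" by simp
  with c \<open>j \<noteq> 0\<close> j show ?thesis using that by (metis mult.right_neutral neq0_conv)
qed

lemma ag_orbit_eq_frob_orbit: "inverse l \<in> frob_orbit l \<Longrightarrow> ag_orbit q l = frob_orbit l"
  using frob_orbit_eq by (auto simp: ag_orbit_eq)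

lemma card_ag_orbit_inverse_notin_frob_orbit:
  assumes "inverse l \<notin> frob_orbit l"
  shows "card (ag_orbit q l) = 2 * frob_period l"
proof -
  have "frob_orbit l \<inter> frob_orbit (inverse l) = {}"
    using assms frob_orbit_eq frob_orbit_self by blast
  then show ?thesis
    by (simp add: ag_orbit_eq card_Un_disjoint finite_frob_orbit card_frob_orbit frob_period_inverse)
qed

lemma card_ag_orbit_even_pos:
  assumes "(l::'k) \<in> tri"
  shows "even (card (ag_orbit q l))" "card (ag_orbit q l) > 0"
proof -
  have "even (card (ag_orbit q l)) \<and> card (ag_orbit q l) > 0"
  proof (cases "inverse l \<in> frob_orbit l")
    case True
    then obtain j where "frob_period l = 2 * j" "j > 0"
      using frob_period_half_inverse[OF assms] by blast
    with True show ?thesis by (simp add: ag_orbit_eq_frob_orbit card_frob_orbit)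
  qed (simp add: card_ag_orbit_inverse_notin_frob_orbit frob_period)
  then show "even (card (ag_orbit q l))" "card (ag_orbit q l) > 0" by simp_all
qed

lemma card_ag_orbit_dvd_iff:
  assumes "(l::'k) \<in> tri"
  shows "card (ag_orbit q l) dvd 2 * t \<longleftrightarrow> l ^ (q ^ t) = l \<or> l ^ (q ^ t) = inverse l"
proof (cases "inverse l \<in> frob_orbit l")
  case True
  then obtain j where j: "frob_period l = 2 * j" "j > 0" "l ^ (q ^ j) = inverse l"
    using frob_period_half_inverse[OF assms] by blast
  have "l ^ (q ^ t) = l \<or> l ^ (q ^ t) = inverse l \<longleftrightarrow> t mod (2 * j) = 0 \<or> t mod (2 * j) = j"
    using frob_power_eq_iff[of l t 0] frob_power_eq_iff[of l t j] j by simp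
  also have "\<dots> \<longleftrightarrow> j dvd t"
  proof -
    have split: "t mod (2 * j) = j * (t div j mod 2) + t mod j"
      using mod_mult2_eq[of t j 2] by (simp add: mult.commute)
    have "t mod j \<noteq> j" using \<open>j > 0\<close> by (metis mod_less_divisor less_irrefl)
    consider "t div j mod 2 = 0" | "t div j mod 2 = 1" by (metis mod2_eq_if)
    then show ?thesis
    proof cases
      case 1
      with split have "t mod (2 * j) = t mod j" by simp
      with \<open>t mod j \<noteq> j\<close> show ?thesis by (simp add: dvd_eq_mod_eq_0)
    next
      case 2
      with split have "t mod (2 * j) = j + t mod j" by simp
      with \<open>j > 0\<close> show ?thesis by (simp add: dvd_eq_mod_eq_0)
    qed
  qed
  finally show ?thesis
    using True j by (simp add: ag_orbit_eq_frob_orbit card_frob_orbit)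
next
  case False
  then have "l ^ (q ^ t) \<noteq> inverse l" unfolding frob_orbit_def by (metis rangeI)
  with False show ?thesis
    by (simp add: card_ag_orbit_inverse_notin_frob_orbit frob_fixed_iff_dvd)
qed

lemma square_eq_one_frob: "(v::'k)\<^sup>2 = 1 \<Longrightarrow> v ^ (q ^ i) = v"
  using square_eq_one_power_odd[of v "q ^ i"] odd_q by simp

lemma half_power_square_fixed:
  assumes "(x::'k) \<noteq> 0" "x ^ (q ^ d) = x"
  shows "(x ^ ((q ^ d - 1) div 2))\<^sup>2 = 1"
proof -
  have "x ^ (q ^ d - 1) * x = 1 * x"
    using assms(2) q_gt_1 by (simp flip: power_Suc2)
  then have "x ^ (q ^ d - 1) = 1" using assms(1) by simp
  moreover have "2 * ((q ^ d - 1) div 2) = q ^ d - 1" using odd_q by simp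
  ultimately show ?thesis by (metis power_mult mult.commute)
qed

lemma half_power_square_inverse:
  assumes "(x::'k) \<noteq> 0" "x ^ (q ^ d) = inverse x"
  shows "(x ^ ((q ^ d + 1) div 2))\<^sup>2 = 1"
proof -
  have "x ^ (q ^ d + 1) = 1" using assms by simp
  moreover have "2 * ((q ^ d + 1) div 2) = q ^ d + 1" using odd_q by simp
  ultimately show ?thesis by (metis power_mult mult.commute)
qed

lemma half_power_period_mult:
  assumes "(x::'k) \<noteq> 0" "x ^ (q ^ d) = x"
  shows "x ^ ((q ^ (d * k) - 1) div 2) = (x ^ ((q ^ d - 1) div 2)) ^ k"
proof (induction k)
  case (Suc k)
  define w where "w = x ^ ((q ^ d - 1) div 2)"
  have "(w ^ k)\<^sup>2 = (w\<^sup>2) ^ k" by (metis power_mult mult.commute)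
  then have "(w ^ k)\<^sup>2 = 1"
    using half_power_square_fixed[OF assms] by (simp add: w_def)
  have "(q ^ (d * Suc k) - 1) div 2 = ((q ^ (d * k) - 1) div 2) * q ^ d + (q ^ d - 1) div 2"
    using odd_power_half_pred_add[OF odd_q, of "d * k" d] by (simp add: add.commute mult.commute)
  then have "x ^ ((q ^ (d * Suc k) - 1) div 2) = (x ^ ((q ^ (d * k) - 1) div 2)) ^ (q ^ d) * w"
    unfolding w_def by (simp only: power_add power_mult)
  also have "\<dots> = w ^ k * w"
    using Suc square_eq_one_frob[OF \<open>(w ^ k)\<^sup>2 = 1\<close>] by (simp add: w_def)
  finally show ?case by (simp add: w_def mult.commute)
qed simp

(* For x in the multiplicative group of F_(q^t) this is its quadratic character; otherwise x lies in
   the cyclic group of order q^t + 1 and this is minus the quadratic character of that group. *)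
definition frob_sign :: "nat \<Rightarrow> 'k \<Rightarrow> rat" where
  "frob_sign t x = (if x ^ (q ^ t) = x then pm_sign (x ^ ((q ^ t - 1) div 2))
                    else - pm_sign (x ^ ((q ^ t + 1) div 2)))"

(* The sign (-1)^(j + eps) of the orbit of l, computed from l instead of the representative
   chosen in epsO. *)
definition orbit_sign :: "'k \<Rightarrow> rat" where
  "orbit_sign l =
     (if inverse l \<in> frob_orbit l then - pm_sign (l ^ ((q ^ (card (ag_orbit q l) div 2) + 1) div 2))
      else pm_sign (l ^ ((q ^ (card (ag_orbit q l) div 2) - 1) div 2)))"

lemma frob_fixed_if_frob_inverse:
  assumes "(l::'k) ^ (q ^ j) = inverse l"
  shows "l ^ (q ^ (2 * j * s)) = l"
proof -
  have "l ^ (q ^ (2 * j)) = l"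
    using assms by (simp flip: frob_frob add: mult_2 power_inverse)
  then show ?thesis
    by (metis frob_fixed_iff_dvd dvd_mult2)
qed

lemma half_power_eq_one_if_frob_inverse:
  assumes "(l::'k) \<noteq> 0" "l ^ (q ^ j) = inverse l"
  shows "l ^ ((q ^ (2 * j * s) - 1) div 2) = 1"
proof -
  have "l ^ (q ^ (2 * j)) = l"
    using frob_fixed_if_frob_inverse[OF assms(2), of 1] by simp
  moreover have "l ^ ((q ^ (2 * j) - 1) div 2) = (l ^ (q ^ j + 1)) ^ ((q ^ j - 1) div 2)"
    unfolding odd_power_half_pred_double[OF odd_q] by (rule power_mult)
  moreover have "l ^ (q ^ j + 1) = 1" using assms by simp
  ultimately show ?thesis
    using half_power_period_mult[OF assms(1), of "2 * j" s] by simp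
qed

lemma frob_sign_even_multiple:
  assumes "(l::'k) \<noteq> 0" "l ^ (q ^ j) = inverse l"
  shows "frob_sign (2 * j * s) l = 1"
  using frob_fixed_if_frob_inverse[OF assms(2)] half_power_eq_one_if_frob_inverse[OF assms]
  by (simp add: frob_sign_def)

lemma frob_sign_odd_multiple:
  assumes "(l::'k) \<in> tri" "l ^ (q ^ j) = inverse l"
  shows "frob_sign (j + 2 * j * s) l = - pm_sign (l ^ ((q ^ j + 1) div 2))"
proof -
  let ?t = "j + 2 * j * s"
  have "l \<noteq> 0" using assms(1) by (simp add: tri_def)
  have "l ^ (q ^ ?t) = (l ^ (q ^ (2 * j * s))) ^ (q ^ j)"
    by (simp add: frob_frob add.commute)
  also have "l ^ (q ^ (2 * j * s)) = l"
    using frob_fixed_if_frob_inverse[OF assms(2)] .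
  finally have "l ^ (q ^ ?t) \<noteq> l" using assms inverse_neq_self_tri by simp
  have "(q ^ ?t + 1) div 2 = (q ^ j + 1) div 2 + ((q ^ (2 * j * s) - 1) div 2) * q ^ j"
    using odd_power_half_succ_split[OF odd_q, of j ?t] by (simp add: mult.commute)
  then have "l ^ ((q ^ ?t + 1) div 2)
      = l ^ ((q ^ j + 1) div 2) * (l ^ ((q ^ (2 * j * s) - 1) div 2)) ^ (q ^ j)"
    by (simp only: power_add power_mult)
  with \<open>l ^ (q ^ ?t) \<noteq> l\<close> show ?thesis
    using half_power_eq_one_if_frob_inverse[OF \<open>l \<noteq> 0\<close> assms(2)] by (simp add: frob_sign_def)
qed

lemma orbit_sign_power_inverse_in_frob_orbit:
  assumes l: "(l::'k) \<in> tri" and inverse: "inverse l \<in> frob_orbit l"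
    and dvd: "card (ag_orbit q l) dvd 2 * t"
  shows "orbit_sign l ^ (2 * t div card (ag_orbit q l)) = frob_sign t l"
proof -
  have "l \<noteq> 0" using l by (simp add: tri_def)
  obtain j where j: "frob_period l = 2 * j" "j > 0" "l ^ (q ^ j) = inverse l"
    using frob_period_half_inverse[OF l inverse] by blast
  have card: "card (ag_orbit q l) = 2 * j"
    using inverse j by (simp add: ag_orbit_eq_frob_orbit card_frob_orbit)
  define v where "v = l ^ ((q ^ j + 1) div 2)"
  have sign: "orbit_sign l = - pm_sign v"
    using inverse card by (simp add: orbit_sign_def v_def)
  have "(pm_sign v)\<^sup>2 = 1" by (simp add: pm_sign_def)
  obtain r where r: "t = j * r" using dvd card by auto
  then have exponent: "2 * t div card (ag_orbit q l) = r" using card j by simp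
  show ?thesis
  proof (cases "even r")
    case True
    then obtain s where "t = 2 * j * s" using r by (auto elim!: evenE)
    then have "frob_sign t l = 1" using frob_sign_even_multiple[OF \<open>l \<noteq> 0\<close> j(3)] by simp
    moreover have "orbit_sign l ^ r = 1"
      using True \<open>(pm_sign v)\<^sup>2 = 1\<close> by (auto simp: sign power_mult elim!: evenE)
    ultimately show ?thesis by (simp add: exponent)
  next
    case False
    then obtain s where "r = 2 * s + 1" by (auto elim!: oddE)
    with r have "t = j + 2 * j * s" by (simp add: algebra_simps)
    then have "frob_sign t l = - pm_sign v" using frob_sign_odd_multiple[OF l j(3)] by (simp add: v_def)
    moreover have "orbit_sign l ^ r = - pm_sign v"
      using False square_eq_one_power_odd[OF \<open>(pm_sign v)\<^sup>2 = 1\<close>] by (simp add: sign)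
    ultimately show ?thesis by (simp add: exponent)
  qed
qed

lemma orbit_sign_power_inverse_notin_frob_orbit:
  assumes l: "(l::'k) \<in> tri" and inverse: "inverse l \<notin> frob_orbit l"
    and dvd: "card (ag_orbit q l) dvd 2 * t"
  shows "orbit_sign l ^ (2 * t div card (ag_orbit q l)) = frob_sign t l"
proof -
  have "l \<noteq> 0" using l by (simp add: tri_def)
  have card: "card (ag_orbit q l) = 2 * frob_period l"
    using card_ag_orbit_inverse_notin_frob_orbit[OF inverse] .
  define w where "w = l ^ ((q ^ frob_period l - 1) div 2)"
  have "w\<^sup>2 = 1"
    unfolding w_def using half_power_square_fixed[OF \<open>l \<noteq> 0\<close> frob_period(2)] .
  obtain r where r: "t = frob_period l * r" using dvd card by auto
  then have "2 * t div card (ag_orbit q l) = r" using card frob_period(1) by simp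
  moreover have "l ^ (q ^ t) = l" using r frob_fixed_iff_dvd by simp
  ultimately show ?thesis
    using inverse card r half_power_period_mult[OF \<open>l \<noteq> 0\<close> frob_period(2), of r]
      pm_sign_power[OF \<open>w\<^sup>2 = 1\<close> one_neq_neg_one]
    by (simp add: orbit_sign_def frob_sign_def w_def)
qed

lemma orbit_sign_power:
  assumes "(l::'k) \<in> tri" and "card (ag_orbit q l) dvd 2 * t"
  shows "orbit_sign l ^ (2 * t div card (ag_orbit q l)) = frob_sign t l"
  using orbit_sign_power_inverse_in_frob_orbit orbit_sign_power_inverse_notin_frob_orbit assms
  by blast

definition pm_fixed :: "nat \<Rightarrow> 'k set" where
  "pm_fixed t = {x \<in> tri. x ^ (q ^ t) = x \<or> x ^ (q ^ t) = inverse x}"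

lemma frob_sign_frob_power:
  assumes "x \<in> pm_fixed t"
  shows "frob_sign t (x ^ (q ^ i)) = frob_sign t x"
proof -
  have "x \<noteq> 0" and x: "x ^ (q ^ t) = x \<or> x ^ (q ^ t) = inverse x"
    using assms by (auto simp: pm_fixed_def tri_def)
  have swap: "(x ^ (q ^ i)) ^ (q ^ t) = (x ^ (q ^ t)) ^ (q ^ i)"
    by (simp add: frob_frob add.commute)
  have frob_half: "(x ^ (q ^ i)) ^ a = x ^ a" if "(x ^ a)\<^sup>2 = 1" for a
    using square_eq_one_frob[OF that, of i] by (metis power_mult mult.commute)
  show ?thesis
  proof (cases "x ^ (q ^ t) = x")
    case True
    then have "(x ^ (q ^ i)) ^ (q ^ t) = x ^ (q ^ i)" using swap by simp
    with True show ?thesis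
      using frob_half half_power_square_fixed[OF \<open>x \<noteq> 0\<close> True] by (simp add: frob_sign_def)
  next
    case False
    with x have inv: "x ^ (q ^ t) = inverse x" by simp
    have "(x ^ (q ^ i)) ^ (q ^ t) \<noteq> x ^ (q ^ i)"
      using False swap frob_inj by metis
    with False show ?thesis
      using frob_half half_power_square_inverse[OF \<open>x \<noteq> 0\<close> inv] by (simp add: frob_sign_def)
  qed
qed

lemma frob_sign_inverse:
  assumes "x \<in> pm_fixed t"
  shows "frob_sign t (inverse x) = frob_sign t x"
proof -
  have "x \<noteq> 0" and x: "x ^ (q ^ t) = x \<or> x ^ (q ^ t) = inverse x"
    using assms by (auto simp: pm_fixed_def tri_def)
  have inverse_half: "inverse x ^ a = x ^ a" if "(x ^ a)\<^sup>2 = 1" for a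
    using that by (auto simp: power_inverse power2_eq_1_iff)
  show ?thesis
  proof (cases "x ^ (q ^ t) = x")
    case True
    then show ?thesis
      using inverse_half half_power_square_fixed[OF \<open>x \<noteq> 0\<close> True]
      by (simp add: frob_sign_def power_inverse)
  next
    case False
    with x have inv: "x ^ (q ^ t) = inverse x" by simp
    with False show ?thesis
      using inverse_half half_power_square_inverse[OF \<open>x \<noteq> 0\<close> inv]
      by (simp add: frob_sign_def power_inverse)
  qed
qed

lemma pm_fixed_closed:
  assumes "x \<in> pm_fixed t"
  shows "x ^ (q ^ i) \<in> pm_fixed t" "inverse x \<in> pm_fixed t"
proof -
  have "x \<in> tri" and x: "x ^ (q ^ t) = x \<or> x ^ (q ^ t) = inverse x"
    using assms by (auto simp: pm_fixed_def)
  have "(x ^ (q ^ i)) ^ (q ^ t) = (x ^ (q ^ t)) ^ (q ^ i)"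
    by (simp add: frob_frob add.commute)
  with x \<open>x \<in> tri\<close> show "x ^ (q ^ i) \<in> pm_fixed t"
    by (auto simp: pm_fixed_def frob_power_in_tri power_inverse)
  from x \<open>x \<in> tri\<close> show "inverse x \<in> pm_fixed t"
    by (auto simp: pm_fixed_def inverse_in_tri power_inverse)
qed

lemma frob_sign_ag_orbit:
  assumes "l \<in> pm_fixed t" and "y \<in> ag_orbit q l"
  shows "frob_sign t y = frob_sign t l"
proof -
  obtain i where "y = l ^ (q ^ i) \<or> y = inverse l ^ (q ^ i)"
    using assms(2) unfolding ag_orbit_eq frob_orbit_def by blast
  then show ?thesis
    using frob_sign_frob_power frob_sign_inverse pm_fixed_closed(2) assms(1) by metis
qed

section \<open>Summing over the orbits\<close>

lemma Omega_memD:
  assumes "Ob \<in> (Omega q :: 'k set set)" and "y \<in> Ob"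
  shows "y \<in> tri" "ag_orbit q y = Ob"
proof -
  obtain x where "x \<in> tri" "Ob = ag_orbit q x" using assms(1) unfolding Omega_def by blast
  with assms(2) show "y \<in> tri" "ag_orbit q y = Ob"
    using ag_orbit_subset_tri ag_orbit_eq_of_mem by auto
qed

lemma Omega_some_mem:
  assumes "Ob \<in> (Omega q :: 'k set set)"
  shows "(SOME l. l \<in> Ob) \<in> Ob"
proof -
  obtain x where "Ob = ag_orbit q x" using assms unfolding Omega_def by blast
  then have "x \<in> Ob" using ag_orbit_self by simp
  then show ?thesis by (rule someI)
qed

lemma card_Omega_even_pos:
  assumes "Ob \<in> (Omega q :: 'k set set)"
  shows "even (card Ob)" "card Ob > 0"
  using card_ag_orbit_even_pos Omega_memD[OF assms Omega_some_mem[OF assms]] by metis+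

lemma ag_orbit_in_Omega'_iff:
  assumes "(l::'k) \<in> tri"
  shows "ag_orbit q l \<in> Omega' q \<longleftrightarrow> inverse l \<in> frob_orbit l"
proof
  assume "ag_orbit q l \<in> Omega' q"
  then obtain x where "ag_orbit q l = frob_orbit x"
    unfolding Omega'_def g_orbit_eq_frob_orbit by blast
  moreover have "l \<in> ag_orbit q l" "inverse l \<in> ag_orbit q l"
    by (simp_all add: ag_orbit_eq frob_orbit_self)
  ultimately have "l \<in> frob_orbit x" "inverse l \<in> frob_orbit x" by simp_all
  then show "inverse l \<in> frob_orbit l" using frob_orbit_eq by simp
next
  assume "inverse l \<in> frob_orbit l"
  then have "ag_orbit q l = g_orbit q l"
    by (simp add: ag_orbit_eq_frob_orbit g_orbit_eq_frob_orbit)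
  with assms show "ag_orbit q l \<in> Omega' q"
    using ag_orbit_self unfolding Omega'_def Omega_def by blast
qed

lemma Omega_sign_eq_orbit_sign:
  assumes "Ob \<in> (Omega q :: 'k set set)"
  shows "(-1::rat) ^ (jO q Ob + epsO q Ob) = orbit_sign (SOME l. l \<in> Ob)"
proof -
  define l where "l = (SOME l. l \<in> Ob)"
  have "l \<in> tri" "ag_orbit q l = Ob"
    using Omega_memD[OF assms Omega_some_mem[OF assms]] by (simp_all add: l_def)
  then have "Ob \<in> Omega' q \<longleftrightarrow> inverse l \<in> frob_orbit l"
    using ag_orbit_in_Omega'_iff by blast
  with \<open>ag_orbit q l = Ob\<close> show ?thesis
    unfolding jO_def epsO_def Let_def orbit_sign_def l_def[symmetric]
    by (simp add: pm_sign_def)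
qed

lemma Omega_sign_power:
  assumes "Ob \<in> (Omega q :: 'k set set)" and "card Ob dvd 2 * t" and "y \<in> Ob"
  shows "((-1::rat) ^ (jO q Ob + epsO q Ob)) ^ (2 * t div card Ob) = frob_sign t y"
proof -
  define l where "l = (SOME l. l \<in> Ob)"
  have l: "l \<in> tri" "ag_orbit q l = Ob"
    using Omega_memD[OF assms(1) Omega_some_mem[OF assms(1)]] by (simp_all add: l_def)
  then have "l \<in> pm_fixed t"
    using card_ag_orbit_dvd_iff[OF l(1)] assms(2) by (simp add: pm_fixed_def)
  then show ?thesis
    using Omega_sign_eq_orbit_sign[OF assms(1)] orbit_sign_power[OF l(1)] l(2) assms(2,3)
      frob_sign_ag_orbit
    by (simp add: l_def)
qed

lemma Union_Omega_card_dvd: "\<Union> {Ob \<in> (Omega q :: 'k set set). card Ob dvd 2 * t} = pm_fixed t"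
proof
  show "\<Union> {Ob \<in> Omega q. card Ob dvd 2 * t} \<subseteq> pm_fixed t"
    using Omega_memD card_ag_orbit_dvd_iff by (fastforce simp: pm_fixed_def)
  show "pm_fixed t \<subseteq> \<Union> {Ob \<in> Omega q. card Ob dvd 2 * t}"
    using card_ag_orbit_dvd_iff ag_orbit_self by (fastforce simp: pm_fixed_def Omega_def)
qed

lemma of_nat_q_power_nonzero:
  assumes "t > 0"
  shows "(of_nat (q ^ t - 1) :: 'k) \<noteq> 0" "(of_nat (q ^ t + 1) :: 'k) \<noteq> 0"
proof -
  have "(of_nat p :: 'k) = 0" using CHAR_k of_nat_CHAR by metis
  then have "(of_nat (q ^ t) :: 'k) = 0"
    using assms q_def m_pos by (simp add: of_nat_power zero_power)
  moreover have "q ^ t \<ge> 1" using q_gt_1 by simp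
  ultimately have minus: "(of_nat (q ^ t - 1) :: 'k) = -1" and plus: "(of_nat (q ^ t + 1) :: 'k) = 1"
    by (simp_all add: of_nat_diff)
  show "(of_nat (q ^ t - 1) :: 'k) \<noteq> 0" unfolding minus by simp
  show "(of_nat (q ^ t + 1) :: 'k) \<noteq> 0" unfolding plus by simp
qed

lemma frob_fixed_iff_root_unity:
  assumes "(x::'k) \<noteq> 0"
  shows "x ^ (q ^ t) = x \<longleftrightarrow> x ^ (q ^ t - 1) = 1"
proof -
  have "x ^ (q ^ t) = x ^ (q ^ t - 1) * x"
    using q_gt_1 by (intro power_minus_mult [symmetric]) simp
  with assms show ?thesis by simp
qed

lemma frob_inverse_iff_root_unity:
  assumes "(x::'k) \<noteq> 0"
  shows "x ^ (q ^ t) = inverse x \<longleftrightarrow> x ^ (q ^ t + 1) = 1"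
  using assms by (auto simp: field_simps)

lemma pm_fixed_eq:
  assumes "t > 0"
  shows "pm_fixed t = ({x::'k. x ^ (q ^ t - 1) = 1} - {1, -1}) \<union> ({x. x ^ (q ^ t + 1) = 1} - {1, -1})"
proof -
  have "q ^ t > 1" using one_less_power[OF q_gt_1 assms] .
  then have "x \<noteq> 0" if "x ^ (q ^ t - 1) = 1 \<or> x ^ (q ^ t + 1) = 1" for x :: 'k
    using that by (auto simp: power_0_left)
  then show ?thesis
    using frob_fixed_iff_root_unity frob_inverse_iff_root_unity
    by (auto simp: pm_fixed_def tri_def)
qed

lemma finite_pm_fixed:
  assumes "t > 0"
  shows "finite (pm_fixed t)"
proof -
  have finite_roots: "finite {x::'k. x ^ M = 1}" if "M > 0" "(of_nat M :: 'k) \<noteq> 0" for M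
    using card_roots_unity_alg_closed[OF that] that(1) card_ge_0_finite by metis
  have "q ^ t > 1" using one_less_power[OF q_gt_1 assms] .
  then have "finite {x::'k. x ^ (q ^ t - 1) = 1}"
    by (intro finite_roots of_nat_q_power_nonzero(1)[OF assms]) simp
  moreover have "finite {x::'k. x ^ (q ^ t + 1) = 1}"
    by (intro finite_roots of_nat_q_power_nonzero(2)[OF assms]) simp
  ultimately show ?thesis
    unfolding pm_fixed_eq[OF assms] by (intro finite_UnI finite_Diff)
qed

lemma frob_sign_root_unity_minus:
  assumes "(y::'k) \<noteq> 0" "y ^ (q ^ t - 1) = 1"
  shows "frob_sign t y = pm_sign (y ^ ((q ^ t - 1) div 2))"
  using assms frob_fixed_iff_root_unity by (simp add: frob_sign_def)

lemma frob_sign_root_unity_plus: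
  assumes "(y::'k) \<in> tri" "y ^ (q ^ t + 1) = 1"
  shows "frob_sign t y = - pm_sign (y ^ ((q ^ t + 1) div 2))"
proof -
  have "y ^ (q ^ t) = inverse y"
    using assms frob_inverse_iff_root_unity by (simp add: tri_def)
  then have "y ^ (q ^ t) \<noteq> y" using inverse_neq_self_tri[OF assms(1)] by simp
  then show ?thesis by (simp add: frob_sign_def)
qed

lemma not_root_unity_plus_if_minus:
  assumes "(y::'k) \<in> tri" "y ^ (q ^ t - 1) = 1"
  shows "y ^ (q ^ t + 1) \<noteq> 1"
proof
  assume "y ^ (q ^ t + 1) = 1"
  moreover have "y \<noteq> 0" using assms(1) by (simp add: tri_def)
  ultimately have "y ^ (q ^ t) = y" "y ^ (q ^ t) = inverse y"
    using assms(2) frob_fixed_iff_root_unity frob_inverse_iff_root_unity by simp_all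
  then show False using inverse_neq_self_tri[OF assms(1)] by simp
qed

lemma sum_frob_sign_pm_fixed:
  assumes "t > 0"
  shows "(\<Sum>y\<in>pm_fixed t. frob_sign t y) = - 2 * ((-1) ^ ((q - 1) div 2)) ^ t"
proof -
  define a where "a = (q ^ t - 1) div 2"
  define U1 where "U1 = {x::'k. x ^ (q ^ t - 1) = 1} - {1, -1}"
  define U2 where "U2 = {x::'k. x ^ (q ^ t + 1) = 1} - {1, -1}"
  have pm_fixed: "pm_fixed t = U1 \<union> U2"
    unfolding U1_def U2_def by (rule pm_fixed_eq[OF assms])
  have "q ^ t > 1" using one_less_power[OF q_gt_1 assms] .
  moreover obtain k where "q ^ t = 2 * k + 1" using odd_q by (metis even_power oddE)
  ultimately have M1: "q ^ t - 1 > 0" "even (q ^ t - 1)" "(q ^ t - 1) div 2 = a"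
    and M2: "q ^ t + 1 > 0" "even (q ^ t + 1)" "(q ^ t + 1) div 2 = a + 1"
    by (simp_all add: a_def)
  have tri: "U1 \<subseteq> tri" "U2 \<subseteq> tri" using pm_fixed by (auto simp: pm_fixed_def)
  have "U1 \<inter> U2 = {}"
    using tri not_root_unity_plus_if_minus by (fastforce simp: U1_def U2_def)
  moreover have "finite U1" "finite U2"
    using finite_pm_fixed[OF assms] by (simp_all add: pm_fixed)
  ultimately have "(\<Sum>y\<in>pm_fixed t. frob_sign t y) = (\<Sum>y\<in>U1. frob_sign t y) + (\<Sum>y\<in>U2. frob_sign t y)"
    by (simp add: pm_fixed sum.union_disjoint)
  also have "(\<Sum>y\<in>U1. frob_sign t y) = (\<Sum>y\<in>U1. pm_sign (y ^ ((q ^ t - 1) div 2)))"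
    using tri frob_sign_root_unity_minus by (intro sum.cong) (auto simp: U1_def tri_def)
  also have "\<dots> = - (1 + (-1) ^ a)"
    unfolding U1_def M1(3)[symmetric]
    by (rule sum_pm_sign_roots_unity_nontrivial[OF M1(1,2) of_nat_q_power_nonzero(1)[OF assms]
        one_neq_neg_one])
  also have "(\<Sum>y\<in>U2. frob_sign t y) = (\<Sum>y\<in>U2. - pm_sign (y ^ ((q ^ t + 1) div 2)))"
    using tri frob_sign_root_unity_plus by (intro sum.cong) (auto simp: U2_def)
  also have "\<dots> = - (\<Sum>y\<in>U2. pm_sign (y ^ ((q ^ t + 1) div 2)))"
    by (rule sum_negf)
  also have "\<dots> = 1 + (-1) ^ (a + 1)"
    using sum_pm_sign_roots_unity_nontrivial[OF M2(1,2) of_nat_q_power_nonzero(2)[OF assms]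
        one_neq_neg_one]
    unfolding U2_def M2(3) by simp
  also have "- (1 + (-1) ^ a) + (1 + (-1) ^ (a + 1)) = - 2 * (-1::rat) ^ a" by simp
  also have "(-1::rat) ^ a = ((-1) ^ ((q - 1) div 2)) ^ t"
    unfolding a_def by (rule neg_one_power_half_pred_power[OF odd_q])
  finally show ?thesis .
qed

lemma finite_Omega: "Ob \<in> (Omega q :: 'k set set) \<Longrightarrow> finite Ob"
  unfolding Omega_def using finite_ag_orbit by blast

lemma Omega_disjoint:
  assumes "A \<in> (Omega q :: 'k set set)" "B \<in> Omega q" "A \<noteq> B"
  shows "A \<inter> B = {}"
  using Omega_memD(2)[OF assms(1)] Omega_memD(2)[OF assms(2)] assms(3) by blast

lemma finite_Omega_card_dvd:
  assumes "t > 0"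
  shows "finite {Ob \<in> (Omega q :: 'k set set). card Ob dvd 2 * t}"
proof -
  have "{Ob \<in> Omega q. card Ob dvd 2 * t} \<subseteq> Pow (pm_fixed t)"
    using Union_Omega_card_dvd[of t] by blast
  then show ?thesis using finite_pm_fixed[OF assms] finite_subset by blast
qed

lemma finite_Omega_card_le: "finite {Ob \<in> (Omega q :: 'k set set). card Ob \<le> N}"
proof -
  have "{Ob \<in> (Omega q :: 'k set set). card Ob \<le> N} \<subseteq> (\<Union>t\<in>{1..N}. {Ob \<in> Omega q. card Ob dvd 2 * t})"
  proof
    fix Ob assume Ob: "Ob \<in> {Ob \<in> (Omega q :: 'k set set). card Ob \<le> N}"
    then obtain t where t: "card Ob = 2 * t" using card_Omega_even_pos(1) by blast
    with Ob card_Omega_even_pos(2) have "t \<in> {1..N}" by fastforce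
    moreover have "Ob \<in> {Ob \<in> Omega q. card Ob dvd 2 * t}" using Ob t by simp
    ultimately show "Ob \<in> (\<Union>t\<in>{1..N}. {Ob \<in> Omega q. card Ob dvd 2 * t})" by blast
  qed
  then show ?thesis
    by (rule finite_subset) (auto intro: finite_Omega_card_dvd)
qed

lemma sum_Omega_card_dvd:
  assumes "n > 0"
  shows "(\<Sum>Ob\<in>{Ob \<in> (Omega q :: 'k set set). card Ob dvd n}.
            of_nat (card Ob) * ((-1::rat) ^ (jO q Ob + epsO q Ob)) ^ (n div card Ob))
         = (if even n then - 2 * ((-1) ^ ((q - 1) div 2)) ^ (n div 2) else 0)"
proof (cases "even n")
  case False
  then have empty: "{Ob \<in> (Omega q :: 'k set set). card Ob dvd n} = {}"
    using card_Omega_even_pos(1) dvd_trans by blast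
  show ?thesis unfolding empty using False by simp
next
  case True
  then obtain t where n: "n = 2 * t" by blast
  with assms have "t > 0" by simp
  let ?Os = "{Ob \<in> (Omega q :: 'k set set). card Ob dvd 2 * t}"
  have "(\<Sum>y\<in>pm_fixed t. frob_sign t y) = (\<Sum>Ob\<in>?Os. \<Sum>y\<in>Ob. frob_sign t y)"
    unfolding Union_Omega_card_dvd[symmetric]
    using finite_Omega_card_dvd[OF \<open>t > 0\<close>] Omega_disjoint
    by (subst sum.Union_disjoint) (auto simp: finite_Omega)
  also have "\<dots> = (\<Sum>Ob\<in>?Os. of_nat (card Ob) * ((-1::rat) ^ (jO q Ob + epsO q Ob)) ^ (2 * t div card Ob))"
  proof (rule sum.cong [OF refl])
    fix Ob assume "Ob \<in> ?Os"
    then have "(\<Sum>y\<in>Ob. frob_sign t y) = (\<Sum>y\<in>Ob. ((-1::rat) ^ (jO q Ob + epsO q Ob)) ^ (2 * t div card Ob))"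
      using Omega_sign_power by (intro sum.cong) simp_all
    then show "(\<Sum>y\<in>Ob. frob_sign t y) = of_nat (card Ob) * ((-1::rat) ^ (jO q Ob + epsO q Ob)) ^ (2 * t div card Ob)"
      by simp
  qed
  finally show ?thesis
    using sum_frob_sign_pm_fixed[OF \<open>t > 0\<close>] n by simp
qed

end

theorem mainTheorem9:
  fixes p m q :: nat
  assumes "prime p" and "odd p" and "m > 0" and "q = p ^ m"
    and "CHAR('k::alg_closed_field) = p"
    and "algebraic_over_prime_field TYPE('k)"
  shows "(\<lambda>N. \<Prod>Ob\<in>{Ob \<in> (Omega q :: 'k set set). card Ob \<le> N}.
            inverse (1 - fps_const ((-1::rat) ^ (jO q Ob + epsO q Ob)) * fps_X ^ card Ob))
         \<longlonglongrightarrow> (1 - fps_const ((-1::rat) ^ ((q - 1) div 2)) * fps_X ^ 2)"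
proof -
  interpret Fq_algebraic_closure p m q "TYPE('k)"
    by unfold_locales (use assms in auto)
  let ?u = "(-1::rat) ^ ((q - 1) div 2)"
  show ?thesis
  proof (rule tendsto_Euler_product)
    show "finite {Ob \<in> (Omega q :: 'k set set). card Ob \<le> N}" for N
      by (rule finite_Omega_card_le)
    show "card Ob > 0" if "Ob \<in> (Omega q :: 'k set set)" for Ob
      using card_Omega_even_pos(2)[OF that] .
    show "(1 - fps_const ?u * fps_X ^ 2) $ 0 = 1" by simp
    fix n :: nat
    assume "n > 0"
    then show "fps_logderiv (1 - fps_const ?u * fps_X ^ 2) $ n
        = (\<Sum>Ob\<in>{Ob \<in> (Omega q :: 'k set set). card Ob dvd n}.
             of_nat (card Ob) * ((-1::rat) ^ (jO q Ob + epsO q Ob)) ^ (n div card Ob))"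
      using fps_logderiv_one_minus_X_power_nth[of 2 ?u n] sum_Omega_card_dvd[of n] by simp
  qed
qed

end
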